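(* Let $d\ge1$, $\theta^*\in\mathbb{R}^d$, $\Sigma_x\in\mathbb{R}^{d\times d}$ positive definite, $\sigma_\epsilon>0$. Let $x\sim\mathcal{N}(0,\Sigma_x)$ and $y=\theta^{*\top}x+\epsilon$, where $\epsilon$ is independent of $x$ with $\mathbb{E}[\epsilon]=0$ and $\mathbb{E}[\epsilon^2]=\sigma_\epsilon^2$. For the squared loss $\ell(\theta;(x,y))=\frac12(y-\theta^\top x)^2$, let $\mu_g(\theta)$ and $\Sigma_g(\theta)$ be the mean and covariance of $\nabla_\theta\ell(\theta;(x,y))$. Let $(x^*,y^* )\in\mathbb{R}^d\times\mathbb{R}$ be a target point with residual $\epsilon^*=y^*-\theta^{*\top}x^*$, let $\delta_g=\nabla_\theta\ell(\theta^*;(x^*,y^* ))-\mu_g(\theta^* )$ and $m^*=\delta_g^\top\Sigma_g(\theta^* )^{-1}\delta_g$. Then \[ m^*=\frac{(\epsilon^* )^2}{\sigma_\epsilon^2}\,(x^* )^\top\Sigma_x^{-1}x^*. \] *)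

theory Defs
  imports "HOL-Probability.Probability"
begin

definition gradient :: "('v::real_inner \<Rightarrow> real) \<Rightarrow> 'v \<Rightarrow> 'v" where
  "gradient f \<theta> = (THE g. GDERIV f \<theta> :> g)"

definition sq_loss :: "real^'n \<Rightarrow> real^'n \<Rightarrow> real \<Rightarrow> real" where
  "sq_loss \<theta> x y = (y - \<theta> \<bullet> x)^2 / 2"

definition pos_def :: "real^'n^'n \<Rightarrow> bool" where
  "pos_def A \<longleftrightarrow> transpose A = A \<and> (\<forall>v. v \<noteq> 0 \<longrightarrow> v \<bullet> (A *v v) > 0)"

text \<open>Centered multivariate Gaussian N(0,S): every nontrivial linear functional
  a.X is (univariate) normal with mean 0 and variance a^T S a.\<close>
definition gaussian_vec :: "'a measure \<Rightarrow> ('a \<Rightarrow> real^'n) \<Rightarrow> real^'n^'n \<Rightarrow> bool" where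
  "gaussian_vec M X S \<longleftrightarrow> X \<in> borel_measurable M \<and>
     (\<forall>a. a \<noteq> 0 \<longrightarrow> distributed M lborel (\<lambda>\<omega>. a \<bullet> X \<omega>)
                          (\<lambda>t. ennreal (normal_density 0 (sqrt (a \<bullet> (S *v a))) t)))"

definition grad_mean :: "'a measure \<Rightarrow> ('a \<Rightarrow> real^'n) \<Rightarrow> ('a \<Rightarrow> real) \<Rightarrow> real^'n \<Rightarrow> real^'n" where
  "grad_mean M X Y \<theta> = (\<integral>\<omega>. gradient (\<lambda>t. sq_loss t (X \<omega>) (Y \<omega>)) \<theta> \<partial>M)"

definition grad_cov :: "'a measure \<Rightarrow> ('a \<Rightarrow> real^'n) \<Rightarrow> ('a \<Rightarrow> real) \<Rightarrow> real^'n \<Rightarrow> real^'n^'n" where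
  "grad_cov M X Y \<theta> = (\<chi> i j. \<integral>\<omega>.
      (gradient (\<lambda>t. sq_loss t (X \<omega>) (Y \<omega>)) \<theta> $ i - grad_mean M X Y \<theta> $ i) *
      (gradient (\<lambda>t. sq_loss t (X \<omega>) (Y \<omega>)) \<theta> $ j - grad_mean M X Y \<theta> $ j) \<partial>M)"

end

theory Submission
  imports Defs
begin

(* At the true parameter the loss gradient is -eps x. Since eps is independent of the centred
   Gaussian x, this gradient has mean E[eps] E[x] = 0 and
   covariance E[eps^2] E[x x^T] = sigma^2 Sigma_x, the second moments of x being read off its
   one-dimensional marginals by polarization. At the target point (x0, y0) the gradient is
   -eps0 x0, so the quadratic form with the inverse covariance is
   eps0^2 / sigma^2 x0^T Sigma_x^-1 x0. *)

lemma gradient_eqI: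
  assumes "GDERIV f \<theta> :> g"
  shows "gradient f \<theta> = g"
  unfolding gradient_def
proof (rule the_equality)
  fix g' assume "GDERIV f \<theta> :> g'"
  then have "(\<lambda>h. h \<bullet> g') = (\<lambda>h. h \<bullet> g)"
    using assms unfolding gderiv_def by (rule has_derivative_unique)
  then show "g' = g"
    by (metis inner_commute vector_eq_rdot)
qed fact

lemma gradient_sq_loss:
  "gradient (\<lambda>t. sq_loss t x y) \<theta> = (\<theta> \<bullet> x - y) *\<^sub>R x"
proof (rule gradient_eqI)
  have "GDERIV (\<lambda>t. t \<bullet> x) \<theta> :> x"
    unfolding gderiv_def by (rule bounded_linear_imp_has_derivative) (rule bounded_linear_inner_left)
  then have "GDERIV (\<lambda>t. y - t \<bullet> x) \<theta> :> 0 - x"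
    by (intro GDERIV_diff GDERIV_const)
  moreover have "DERIV (\<lambda>u. u^2 / 2) (y - \<theta> \<bullet> x) :> y - \<theta> \<bullet> x"
    by (auto intro!: derivative_eq_intros)
  ultimately have "GDERIV (\<lambda>t. (y - t \<bullet> x)^2 / 2) \<theta> :> (y - \<theta> \<bullet> x) *\<^sub>R (0 - x)"
    by (rule GDERIV_DERIV_compose)
  then show "GDERIV (\<lambda>t. sq_loss t x y) \<theta> :> (\<theta> \<bullet> x - y) *\<^sub>R x"
    unfolding sq_loss_def by (rule GDERIV_subst) (simp add: algebra_simps)
qed

lemma integrable_vec_componentwise:
  fixes f :: "'a \<Rightarrow> real^'n"
  assumes "\<And>i. integrable M (\<lambda>\<omega>. f \<omega> $ i)"
  shows "integrable M f"
proof -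
  have "integrable M (\<lambda>\<omega>. \<Sum>b\<in>Basis. (f \<omega> \<bullet> b) *\<^sub>R b)"
    using assms by (auto simp: Basis_vec_def inner_axis intro!: integrable_sum integrable_scaleR_left)
  then show ?thesis by (simp add: euclidean_representation)
qed

lemma integral_vec_nth:
  fixes f :: "'a \<Rightarrow> real^'n"
  assumes "integrable M f"
  shows "(\<integral>\<omega>. f \<omega> \<partial>M) $ i = (\<integral>\<omega>. f \<omega> $ i \<partial>M)"
  by (rule integral_bounded_linear[OF bounded_linear_vec_nth assms, symmetric])

lemma (in prob_space) indep_var_compose_of_indep_set:
  assumes X: "X \<in> measurable M S" and Y: "Y \<in> measurable M T"
    and indep: "indep_set {X -` A \<inter> space M | A. A \<in> sets S} {Y -` B \<inter> space M | B. B \<in> sets T}"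
    and f: "f \<in> measurable S N" and g: "g \<in> measurable T N"
  shows "indep_var N (\<lambda>\<omega>. f (X \<omega>)) N (\<lambda>\<omega>. g (Y \<omega>))"
proof -
  have preimages_compose: "{(\<lambda>\<omega>. h (Z \<omega>)) -` A \<inter> space M | A. A \<in> sets N}
      \<subseteq> {Z -` B \<inter> space M | B. B \<in> sets K}"
    if "Z \<in> measurable M K" "h \<in> measurable K N" for Z h K
  proof clarify
    fix A assume "A \<in> sets N"
    then have "h -` A \<inter> space K \<in> sets K"
      using that(2) by measurable
    moreover have "(\<lambda>\<omega>. h (Z \<omega>)) -` A \<inter> space M = Z -` (h -` A \<inter> space K) \<inter> space M"
      using measurable_space[OF that(1)] by auto
    ultimately show "\<exists>B. (\<lambda>\<omega>. h (Z \<omega>)) -` A \<inter> space M = Z -` B \<inter> space M \<and> B \<in> sets K"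
      by blast
  qed
  have "indep_set {(\<lambda>\<omega>. f (X \<omega>)) -` A \<inter> space M | A. A \<in> sets N}
                  {(\<lambda>\<omega>. g (Y \<omega>)) -` A \<inter> space M | A. A \<in> sets N}"
    using indep preimages_compose[OF X f] preimages_compose[OF Y g]
    unfolding indep_sets2_eq by (meson subset_trans subsetD)
  moreover have "Int_stable {Z -` A \<inter> space M | A. A \<in> sets N}" for Z
  proof (rule Int_stableI, clarify)
    fix A B assume "A \<in> sets N" "B \<in> sets N"
    then show "\<exists>C. Z -` A \<inter> space M \<inter> (Z -` B \<inter> space M) = Z -` C \<inter> space M \<and> C \<in> sets N"
      by (intro exI[of _ "A \<inter> B"]) auto
  qed
  ultimately show ?thesis
    unfolding indep_var_eq using X Y f g by (auto intro: indep_set_sigma_sets)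
qed

lemma matrix_inv_eqI:
  fixes A :: "'a::semiring_1^'n^'n"
  assumes "A ** B = mat 1" "B ** A = mat 1"
  shows "matrix_inv A = B"
  unfolding matrix_inv_def
proof (rule some_equality)
  fix B' assume B': "A ** B' = mat 1 \<and> B' ** A = mat 1"
  have "B' = B' ** (A ** B)"
    using assms by simp
  also have "\<dots> = (B' ** A) ** B"
    by (rule matrix_mul_assoc)
  finally show "B' = B"
    using B' by simp
qed (use assms in simp)

lemma matrix_inv_inverse:
  fixes A :: "'a::semiring_1^'n^'n"
  assumes "invertible A"
  shows "A ** matrix_inv A = mat 1" "matrix_inv A ** A = mat 1"
  using someI_ex[OF assms[unfolded invertible_def]] unfolding matrix_inv_def by auto

lemma matrix_inv_scaleR:
  fixes A :: "real^'n^'n"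
  assumes "invertible A" "c \<noteq> 0"
  shows "matrix_inv (c *\<^sub>R A) = (1 / c) *\<^sub>R matrix_inv A"
  by (rule matrix_inv_eqI) (use assms matrix_inv_inverse[OF assms(1)] in \<open>simp_all add: matrix_scalar_ac\<close>)

lemma pos_def_invertible:
  assumes "pos_def A"
  shows "invertible A"
  unfolding invertible_left_inverse matrix_left_invertible_ker
  using assms unfolding pos_def_def by force

lemma pos_def_symmetric:
  assumes "pos_def A"
  shows "A $ j $ i = A $ i $ j"
  using assms unfolding pos_def_def by (metis transpose_def vec_lambda_beta)

lemma inner_axis_matrix_vector_axis:
  "axis i 1 \<bullet> (A *v axis j 1) = (A $ i $ j :: real)"
  by (simp add: matrix_vector_mult_basis inner_axis' column_def)

lemma gaussian_vec_linear_moments: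
  fixes X :: "'a \<Rightarrow> real^'n"
  assumes "prob_space M" "gaussian_vec M X S" "a \<bullet> (S *v a) > 0"
  shows "integrable M (\<lambda>\<omega>. a \<bullet> X \<omega>)" "(\<integral>\<omega>. a \<bullet> X \<omega> \<partial>M) = 0"
    and "integrable M (\<lambda>\<omega>. (a \<bullet> X \<omega>)^2)" "(\<integral>\<omega>. (a \<bullet> X \<omega>)^2 \<partial>M) = a \<bullet> (S *v a)"
proof -
  interpret prob_space M by fact
  define s where "s = sqrt (a \<bullet> (S *v a))"
  have "s > 0" "s^2 = a \<bullet> (S *v a)"
    using assms(3) unfolding s_def by simp_all
  have "a \<noteq> 0"
    using assms(3) by auto
  then have D: "distributed M lborel (\<lambda>\<omega>. a \<bullet> X \<omega>) (\<lambda>t. ennreal (normal_density 0 s t))"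
    using assms(2) unfolding gaussian_vec_def s_def by auto
  show "integrable M (\<lambda>\<omega>. a \<bullet> X \<omega>)"
    using distributed_integrable[OF D, of "\<lambda>t. t"] integrable_normal_moment_nz_1[OF \<open>s > 0\<close>] by simp
  show mean: "(\<integral>\<omega>. a \<bullet> X \<omega> \<partial>M) = 0"
    using normal_distributed_expectation[OF \<open>s > 0\<close> D] by simp
  show "integrable M (\<lambda>\<omega>. (a \<bullet> X \<omega>)^2)"
    using distributed_integrable[OF D, of "\<lambda>t. t^2"] integrable_normal_moment[OF \<open>s > 0\<close>, of 0 2]
    by simp
  show "(\<integral>\<omega>. (a \<bullet> X \<omega>)^2 \<partial>M) = a \<bullet> (S *v a)"
    using normal_distributed_variance[OF \<open>s > 0\<close> D] mean \<open>s^2 = a \<bullet> (S *v a)\<close> by simp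
qed

lemma gaussian_vec_coordinate_moments:
  fixes X :: "'a \<Rightarrow> real^'n"
  assumes "prob_space M" "pos_def S" "gaussian_vec M X S"
  shows "integrable M (\<lambda>\<omega>. X \<omega> $ i)" "(\<integral>\<omega>. X \<omega> $ i \<partial>M) = 0"
    and "integrable M (\<lambda>\<omega>. X \<omega> $ i * X \<omega> $ j)" "(\<integral>\<omega>. X \<omega> $ i * X \<omega> $ j \<partial>M) = S $ i $ j"
proof -
  have quad_pos: "a \<bullet> (S *v a) > 0" if "a \<noteq> 0" for a
    using assms(2) that unfolding pos_def_def by blast
  note moments = gaussian_vec_linear_moments[OF assms(1,3) quad_pos]
  have coord: "X \<omega> $ k = axis k 1 \<bullet> X \<omega>" for \<omega> k
    by (simp add: inner_axis')
  show "integrable M (\<lambda>\<omega>. X \<omega> $ i)" "(\<integral>\<omega>. X \<omega> $ i \<partial>M) = 0"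
    unfolding coord using moments(1,2)[of "axis i 1"] by simp_all
  define a where "a = axis i 1 + axis j (1::real)"
  have "a $ i \<noteq> 0"
    by (simp add: a_def axis_def)
  then have "a \<noteq> 0" by auto
  have aSa: "a \<bullet> (S *v a) = S $ i $ i + 2 * S $ i $ j + S $ j $ j"
    using pos_def_symmetric[OF assms(2), of i j] unfolding a_def
    by (simp add: matrix_vector_right_distrib inner_add_left inner_add_right inner_axis_matrix_vector_axis)
  have polar: "X \<omega> $ i * X \<omega> $ j =
      ((a \<bullet> X \<omega>)^2 - (axis i 1 \<bullet> X \<omega>)^2 - (axis j 1 \<bullet> X \<omega>)^2) / 2" for \<omega>
    by (simp add: a_def inner_add_left inner_axis' power2_eq_square algebra_simps)
  show "integrable M (\<lambda>\<omega>. X \<omega> $ i * X \<omega> $ j)"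
    unfolding polar using moments(3)[OF \<open>a \<noteq> 0\<close>] moments(3)[of "axis _ 1"] by auto
  show "(\<integral>\<omega>. X \<omega> $ i * X \<omega> $ j \<partial>M) = S $ i $ j"
    unfolding polar using moments(3,4)[OF \<open>a \<noteq> 0\<close>] moments(3,4)[of "axis _ 1"] aSa
    by (simp add: integral_diff inner_axis_matrix_vector_axis)
qed

locale gaussian_linear_model = prob_space M for M :: "'a measure" +
  fixes X :: "'a \<Rightarrow> real^'n" and eps :: "'a \<Rightarrow> real" and \<Sigma>x :: "real^'n^'n" and \<sigma> :: real
  assumes pos_def_\<Sigma>x: "pos_def \<Sigma>x"
    and gaussian_X: "gaussian_vec M X \<Sigma>x"
    and eps_measurable[measurable]: "eps \<in> borel_measurable M"
    and indep_X_eps_events: "indep_set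
           {X -` A \<inter> space M | A. A \<in> sets (borel :: (real^'n) measure)}
           {eps -` B \<inter> space M | B. B \<in> sets (borel :: real measure)}"
    and integrable_eps_sq: "integrable M (\<lambda>\<omega>. (eps \<omega>)^2)"
    and second_moment_eps: "(\<integral>\<omega>. (eps \<omega>)^2 \<partial>M) = \<sigma>^2"
begin

lemma X_measurable[measurable]: "X \<in> borel_measurable M"
  using gaussian_X unfolding gaussian_vec_def by simp

lemma indep_var_X_eps_compose:
  assumes "f \<in> borel_measurable borel" "g \<in> borel_measurable borel"
  shows "indep_var borel (\<lambda>\<omega>. f (X \<omega>) :: real) borel (\<lambda>\<omega>. g (eps \<omega>))"
  by (rule indep_var_compose_of_indep_set[OF X_measurable eps_measurable indep_X_eps_events assms])

lemma integrable_eps: "integrable M eps"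
  using square_integrable_imp_integrable[OF eps_measurable integrable_eps_sq] .

lemmas X_moments = gaussian_vec_coordinate_moments[OF prob_space_axioms pos_def_\<Sigma>x gaussian_X]

lemma gradient_sq_loss_linear_model:
  "gradient (\<lambda>t. sq_loss t (X \<omega>) (\<theta> \<bullet> X \<omega> + eps \<omega>)) \<theta> = - (eps \<omega> *\<^sub>R X \<omega>)"
  by (simp add: gradient_sq_loss)

lemma grad_mean_linear_model: "grad_mean M X (\<lambda>\<omega>. \<theta> \<bullet> X \<omega> + eps \<omega>) \<theta> = 0"
proof -
  have indep: "indep_var borel (\<lambda>\<omega>. X \<omega> $ i) borel (\<lambda>\<omega>. eps \<omega>)" for i
    by (rule indep_var_X_eps_compose) simp_all
  have "(\<integral>\<omega>. X \<omega> $ i * eps \<omega> \<partial>M) = 0" for i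
    using indep_var_lebesgue_integral[OF indep X_moments(1) integrable_eps] X_moments(2) by simp
  moreover have "integrable M (\<lambda>\<omega>. - (eps \<omega> *\<^sub>R X \<omega>))"
    using indep_var_integrable[OF indep X_moments(1) integrable_eps]
    by (intro integrable_vec_componentwise) (simp add: mult.commute)
  ultimately show ?thesis
    unfolding grad_mean_def gradient_sq_loss_linear_model
    by (simp add: vec_eq_iff integral_vec_nth mult.commute)
qed

lemma grad_cov_linear_model: "grad_cov M X (\<lambda>\<omega>. \<theta> \<bullet> X \<omega> + eps \<omega>) \<theta> = \<sigma>^2 *\<^sub>R \<Sigma>x"
proof -
  have indep: "indep_var borel (\<lambda>\<omega>. X \<omega> $ i * X \<omega> $ j) borel (\<lambda>\<omega>. (eps \<omega>)^2)" for i j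
    by (rule indep_var_X_eps_compose) simp_all
  have "(\<integral>\<omega>. (X \<omega> $ i * X \<omega> $ j) * (eps \<omega>)^2 \<partial>M) = \<Sigma>x $ i $ j * \<sigma>^2" for i j
    using indep_var_lebesgue_integral[OF indep X_moments(3) integrable_eps_sq] X_moments(4)
      second_moment_eps by simp
  then show ?thesis
    unfolding grad_cov_def grad_mean_linear_model gradient_sq_loss_linear_model
    by (simp add: vec_eq_iff power2_eq_square algebra_simps)
qed

end

theorem theoremF10:
  fixes M :: "'a measure"
    and X :: "'a \<Rightarrow> real^'n" and eps :: "'a \<Rightarrow> real"
    and \<theta>s :: "real^'n" and \<Sigma>x :: "real^'n^'n" and \<sigma> :: real
    and xs :: "real^'n" and ys :: real
  assumes "prob_space M"
    and "pos_def \<Sigma>x"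
    and "\<sigma> > 0"
    and "gaussian_vec M X \<Sigma>x"
    and "eps \<in> borel_measurable M"
    and "prob_space.indep_set M
           {X -` A \<inter> space M | A. A \<in> sets (borel :: (real^'n) measure)}
           {eps -` B \<inter> space M | B. B \<in> sets (borel :: real measure)}"
    and "integrable M (\<lambda>\<omega>. (eps \<omega>)^2)"
    and "(\<integral>\<omega>. eps \<omega> \<partial>M) = 0"
    and "(\<integral>\<omega>. (eps \<omega>)^2 \<partial>M) = \<sigma>^2"
  shows
    "let Y = (\<lambda>\<omega>. \<theta>s \<bullet> X \<omega> + eps \<omega>);
         es = ys - \<theta>s \<bullet> xs;
         \<delta> = gradient (\<lambda>t. sq_loss t xs ys) \<theta>s - grad_mean M X Y \<theta>s;
         m = \<delta> \<bullet> (matrix_inv (grad_cov M X Y \<theta>s) *v \<delta>)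
     in m = es^2 / \<sigma>^2 * (xs \<bullet> (matrix_inv \<Sigma>x *v xs))"
proof -
  interpret gaussian_linear_model M X eps \<Sigma>x \<sigma>
    by (intro gaussian_linear_model.intro gaussian_linear_model_axioms.intro) (fact assms)+
  have \<delta>: "gradient (\<lambda>t. sq_loss t xs ys) \<theta>s - grad_mean M X (\<lambda>\<omega>. \<theta>s \<bullet> X \<omega> + eps \<omega>) \<theta>s
      = (\<theta>s \<bullet> xs - ys) *\<^sub>R xs"
    by (simp add: gradient_sq_loss grad_mean_linear_model)
  have inv: "matrix_inv (grad_cov M X (\<lambda>\<omega>. \<theta>s \<bullet> X \<omega> + eps \<omega>) \<theta>s) = (1 / \<sigma>^2) *\<^sub>R matrix_inv \<Sigma>x"
    using \<open>\<sigma> > 0\<close> by (simp add: grad_cov_linear_model matrix_inv_scaleR pos_def_invertible pos_def_\<Sigma>x)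
  show ?thesis
    unfolding Let_def \<delta> inv power2_commute[of ys]
    by (simp add: matrix_vector_mult_scaleR scaleR_matrix_vector_assoc[symmetric] power2_eq_square)
qed

end
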